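(* In the setting where $M$ has $3$ edges, $p,q\in(0,1]$, $(\omega_e)_{e\in E_\varGamma}$ and $(\omega_{e,j,g})$ are mutually independent Bernoulli variables with means $p$ and $q$ respectively, and $$\widehat C_M=\frac{1}{3pq}\sum_{e\in E_\varGamma}\sum_{j=1}^{3}\sum_{g\in E_j(e)}\omega_e\,\omega_{e,j,g}\,\eta(W_{e,j,g}),$$ the variance satisfies $\mathrm{Var}[\widehat C_M]\le\frac{1-pq}{pq}\,C_M^2$.
   Context: A temporal graph $\varGamma=(V_\varGamma,E_\varGamma)$ consists of a finite vertex set $V_\varGamma$ and a finite sequence $E_\varGamma$ of $m$ temporal edges $(u,v,t)$, $u,v\in V_\varGamma$, $t\in\mathbb{R}^+$, with distinct timestamps. A temporal motif $M$ is an ordered sequence of $l$ directed edges $\langle e'_1=(u'_1,v'_1),\dots,e'_l=(u'_l,v'_l)\rangle$ on a vertex set $V_M$ whose underlying graph is connected; here $l=3$ (and $|V_M|=3$). Fix $\delta\ge0$. A sequence $\langle (w_1,x_1,t_1),\dots,(w_l,x_l,t_l)\rangle$ of edges of $E_\varGamma$ with $t_1<\dots<t_l$ is a $\delta$-instance of $M$ if there is a bijection $f$ from its vertices to $V_M$ with $f(w_i)=u'_i$, $f(x_i)=v'_i$ for all $i$, and $t_l-t_1\le\delta$. $C_M$ is the number of $\delta$-instances of $M$ in $\varGamma$; $\eta_j(e)$ is the number of $\delta$-instances of $M$ whose $j$-th edge is $e$. Wedge data: for each $e\in E_\varGamma$ and $j\in\{1,2,3\}$ there is a finite set $E_j(e)\subseteq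 E_\varGamma$ and for each $g\in E_j(e)$ a nonnegative integer $\eta(W_{e,j,g})$ (the number of $\delta$-instances of $M$ containing the temporal wedge formed by $e$ and $g$, with $e$ mapped to $e'_j$), such that $\sum_{g\in E_j(e)}\eta(W_{e,j,g})=\eta_j(e)$. *)

theory Defs
  imports "HOL-Probability.Probability"
begin

type_synonym 'v tedge = "'v \<times> 'v \<times> real"

definition tsrc :: "'v tedge \<Rightarrow> 'v" where "tsrc e = fst e"
definition tdst :: "'v tedge \<Rightarrow> 'v" where "tdst e = fst (snd e)"
definition ttime :: "'v tedge \<Rightarrow> real" where "ttime e = snd (snd e)"

definition temporal_graph :: "'v set \<Rightarrow> 'v tedge set \<Rightarrow> bool" where
  "temporal_graph V E \<longleftrightarrow> finite V \<and> finite E \<and>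
     (\<forall>e\<in>E. tsrc e \<in> V \<and> tdst e \<in> V \<and> ttime e > 0) \<and> inj_on ttime E"

definition motif_vertices :: "('m \<times> 'm) list \<Rightarrow> 'm set" where
  "motif_vertices Mo = fst ` set Mo \<union> snd ` set Mo"

definition motif_connected :: "('m \<times> 'm) list \<Rightarrow> bool" where
  "motif_connected Mo \<longleftrightarrow>
     (\<forall>a\<in>motif_vertices Mo. \<forall>b\<in>motif_vertices Mo.
        (a, b) \<in> (set Mo \<union> (set Mo)\<inverse>)\<^sup>*)"

definition inst_vertices :: "'v tedge list \<Rightarrow> 'v set" where
  "inst_vertices I = tsrc ` set I \<union> tdst ` set I"

definition delta_instances :: "'v tedge set \<Rightarrow> ('m \<times> 'm) list \<Rightarrow> real \<Rightarrow> 'v tedge list set" where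
  "delta_instances E Mo \<delta> = {I. length I = length Mo \<and> set I \<subseteq> E \<and>
     (\<forall>i. Suc i < length I \<longrightarrow> ttime (I ! i) < ttime (I ! Suc i)) \<and>
     length I > 0 \<and> ttime (last I) - ttime (hd I) \<le> \<delta> \<and>
     (\<exists>f. bij_betw f (inst_vertices I) (motif_vertices Mo) \<and>
        (\<forall>i<length I. f (tsrc (I ! i)) = fst (Mo ! i) \<and> f (tdst (I ! i)) = snd (Mo ! i)))}"

definition motif_count :: "'v tedge set \<Rightarrow> ('m \<times> 'm) list \<Rightarrow> real \<Rightarrow> nat" where
  "motif_count E Mo \<delta> = card (delta_instances E Mo \<delta>)"

text \<open>eta_j(e): number of delta-instances whose j-th edge (j counted from 1) is e.\<close>
definition eta :: "'v tedge set \<Rightarrow> ('m \<times> 'm) list \<Rightarrow> real \<Rightarrow> nat \<Rightarrow> 'v tedge \<Rightarrow> nat" where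
  "eta E Mo \<delta> j e = card {I \<in> delta_instances E Mo \<delta>. I ! (j - 1) = e}"

end

theory Submission
  imports Defs
begin

text \<open>Up to the factor \<open>3pq\<close> the estimator is \<open>F = \<Sum> \<eta>(W\<^sub>e\<^sub>,\<^sub>j\<^sub>,\<^sub>g) \<omega>\<^sub>e \<omega>\<^sub>e\<^sub>,\<^sub>j\<^sub>,\<^sub>g\<close>.
  Its values lie in \<open>[0, S]\<close>, where \<open>S\<close> is the total weight, and
  \<open>S = \<Sum>\<^sub>j \<Sum>\<^sub>e \<eta>\<^sub>j(e) = 3 C\<^sub>M\<close> because each instance has exactly one \<open>j\<close>-th edge. Independence
  is needed only to get \<open>P(\<omega>\<^sub>e \<and> \<omega>\<^sub>e\<^sub>,\<^sub>j\<^sub>,\<^sub>g) = pq\<close>, hence \<open>E F = pq S\<close>: no covariances need to be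
  controlled, since every random variable with values in \<open>[0, S]\<close> has
  \<open>Var F \<le> E F \<cdot> (S - E F) = pq (1 - pq) S\<^sup>2\<close>.\<close>

lemma sum_sum_sum_Sigma:
  assumes "finite A" "finite J" "\<And>a j. a \<in> A \<Longrightarrow> j \<in> J \<Longrightarrow> finite (B a j)"
  shows "(\<Sum>a\<in>A. \<Sum>j\<in>J. \<Sum>b\<in>B a j. f a j b)
    = (\<Sum>(a, j, b)\<in>Sigma A (\<lambda>a. Sigma J (B a)). f a j b)"
proof -
  have "(\<Sum>a\<in>A. \<Sum>j\<in>J. \<Sum>b\<in>B a j. f a j b) = (\<Sum>a\<in>A. \<Sum>(j, b)\<in>Sigma J (B a). f a j b)"
    using assms by (intro sum.cong[OF refl] sum.Sigma) auto
  also have "\<dots> = (\<Sum>(a, j, b)\<in>Sigma A (\<lambda>a. Sigma J (B a)). f a j b)"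
    using assms by (intro sum.Sigma) auto
  finally show ?thesis .
qed

lemma sum_eta_eq_motif_count:
  assumes "finite E" "1 \<le> j" "j \<le> length Mo"
  shows "(\<Sum>e\<in>E. eta E Mo \<delta> j e) = motif_count E Mo \<delta>"
proof -
  let ?D = "delta_instances E Mo \<delta>"
  have D: "set I \<subseteq> E \<and> length I = length Mo" if "I \<in> ?D" for I
    using that by (simp add: delta_instances_def)
  have fin: "finite ?D"
    by (rule finite_subset[OF _ finite_lists_length_eq[OF \<open>finite E\<close>, of "length Mo"]])
      (use D in blast)
  have img: "(\<lambda>I. I ! (j - 1)) ` ?D \<subseteq> E"
  proof (rule image_subsetI)
    fix I assume "I \<in> ?D"
    with D assms(2,3) have "I ! (j - 1) \<in> set I" "set I \<subseteq> E" by auto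
    then show "I ! (j - 1) \<in> E" by blast
  qed
  have "(\<Sum>e\<in>E. \<Sum>I\<in>{I \<in> ?D. I ! (j - 1) = e}. 1) = (\<Sum>I\<in>?D. 1::nat)"
    by (rule sum.group[OF fin \<open>finite E\<close> img])
  then show ?thesis by (simp add: eta_def motif_count_def)
qed

lemma sum_wedge_counts_eq_three_motif_count:
  assumes "finite E" "length Mo = 3"
    and "\<And>e j. e \<in> E \<Longrightarrow> j \<in> {1,2,3} \<Longrightarrow> (\<Sum>g\<in>Ej e j. etaW e j g) = eta E Mo \<delta> j e"
  shows "(\<Sum>e\<in>E. \<Sum>j\<in>{1,2,3::nat}. \<Sum>g\<in>Ej e j. etaW e j g) = 3 * motif_count E Mo \<delta>"
proof -
  have "(\<Sum>e\<in>E. \<Sum>j\<in>{1,2,3::nat}. \<Sum>g\<in>Ej e j. etaW e j g)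
      = (\<Sum>e\<in>E. \<Sum>j\<in>{1,2,3::nat}. eta E Mo \<delta> j e)"
    using assms(3) by (intro sum.cong[OF refl]) auto
  also have "\<dots> = (\<Sum>j\<in>{1,2,3::nat}. \<Sum>e\<in>E. eta E Mo \<delta> j e)"
    by (rule sum.swap)
  also have "\<dots> = (\<Sum>j\<in>{1,2,3::nat}. motif_count E Mo \<delta>)"
    using assms(1,2) by (intro sum.cong[OF refl] sum_eta_eq_motif_count) auto
  also have "\<dots> = 3 * motif_count E Mo \<delta>"
    by simp
  finally show ?thesis .
qed

lemma (in prob_space) prob_bernoulli_True:
  assumes "random_variable (count_space UNIV) X"
    and "distr M (count_space UNIV) X = measure_pmf (bernoulli_pmf p)" "0 \<le> p" "p \<le> 1"
  shows "prob {x \<in> space M. X x} = p"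
proof -
  have "prob {x \<in> space M. X x} = measure (distr M (count_space UNIV) X) {True}"
    using assms(1) by (subst measure_distr) (auto intro!: arg_cong[where f=prob])
  then show ?thesis using assms(2-4) by (simp add: measure_pmf_single)
qed

lemma (in prob_space) prob_conj_indep_vars:
  assumes "indep_vars (\<lambda>_. count_space UNIV) X I" "i \<in> I" "j \<in> I" "i \<noteq> j"
  shows "prob {x \<in> space M. X i x \<and> X j x}
       = prob {x \<in> space M. X i x} * prob {x \<in> space M. X j x}"
proof -
  have "prob (\<Inter>k\<in>{i, j}. X k -` {True} \<inter> space M)
      = (\<Prod>k\<in>{i, j}. prob (X k -` {True} \<inter> space M))"
    using assms by (intro indep_varsD) auto
  moreover have "(\<Inter>k\<in>{i, j}. X k -` {True} \<inter> space M) = {x \<in> space M. X i x \<and> X j x}" by auto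
  moreover have "X k -` {True} \<inter> space M = {x \<in> space M. X k x}" for k by auto
  ultimately show ?thesis using assms(4) by simp
qed

lemma (in prob_space) prob_conj_indep_bernoulli:
  assumes indep: "indep_vars (\<lambda>_. count_space UNIV) X I" and "i \<in> I" "j \<in> I" "i \<noteq> j"
    and "distr M (count_space UNIV) (X i) = measure_pmf (bernoulli_pmf p)" "0 \<le> p" "p \<le> 1"
    and "distr M (count_space UNIV) (X j) = measure_pmf (bernoulli_pmf q)" "0 \<le> q" "q \<le> 1"
  shows "prob {x \<in> space M. X i x \<and> X j x} = p * q"
proof -
  have "random_variable (count_space UNIV) (X k)" if "k \<in> I" for k
    using indep that by (auto simp: indep_vars_def)
  then show ?thesis
    using assms by (simp add: prob_conj_indep_vars prob_bernoulli_True)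
qed

lemma (in prob_space) variance_le_of_bounded:
  fixes X :: "'a \<Rightarrow> real"
  assumes X: "X \<in> borel_measurable M"
    and bounds: "\<And>x. x \<in> space M \<Longrightarrow> 0 \<le> X x \<and> X x \<le> B"
  shows "variance X \<le> expectation X * (B - expectation X)"
proof -
  have int: "integrable M X"
    using bounds by (intro integrable_const_bound[where B=B, OF _ X]) auto
  have int2: "integrable M (\<lambda>x. (X x)\<^sup>2)"
    by (rule integrable_const_bound[where B="B\<^sup>2"])
      (use bounds X in \<open>auto intro!: power_mono\<close>)
  have "expectation (\<lambda>x. (X x)\<^sup>2) \<le> expectation (\<lambda>x. B * X x)"
    using bounds int int2 by (intro integral_mono) (auto simp: power2_eq_square intro!: mult_right_mono)
  then show ?thesis
    using variance_eq[OF int int2] by (simp add: power2_eq_square algebra_simps)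
qed

lemma (in prob_space) variance_cmult:
  fixes X :: "'a \<Rightarrow> real"
  shows "variance (\<lambda>x. c * X x) = c\<^sup>2 * variance X"
proof -
  have "variance (\<lambda>x. c * X x) = expectation (\<lambda>x. c\<^sup>2 * (X x - expectation X)\<^sup>2)"
    by (simp add: power2_eq_square algebra_simps)
  then show ?thesis by simp
qed

lemma (in prob_space) variance_weighted_sum_events_le:
  assumes T: "finite T"
    and events: "\<And>t. t \<in> T \<Longrightarrow> Measurable.pred M (Y t)"
    and prob: "\<And>t. t \<in> T \<Longrightarrow> prob {x \<in> space M. Y t x} = r"
    and w: "\<And>t. t \<in> T \<Longrightarrow> 0 \<le> w t"
  shows "variance (\<lambda>x. \<Sum>t\<in>T. w t * of_bool (Y t x)) \<le> r * (1 - r) * (\<Sum>t\<in>T. w t)\<^sup>2"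
proof -
  let ?F = "\<lambda>x. \<Sum>t\<in>T. w t * of_bool (Y t x)"
  have meas: "(\<lambda>x. w t * of_bool (Y t x)) \<in> borel_measurable M" if "t \<in> T" for t
    using events[OF that] by measurable
  have int: "integrable M (\<lambda>x. w t * of_bool (Y t x))" if "t \<in> T" for t
    by (rule integrable_const_bound[where B="\<bar>w t\<bar>", OF _ meas[OF that]]) simp
  have exp: "expectation (\<lambda>x. w t * of_bool (Y t x)) = r * w t" if "t \<in> T" for t
  proof -
    have "expectation (\<lambda>x. w t * of_bool (Y t x))
        = expectation (\<lambda>x. w t * indicator {x \<in> space M. Y t x} x)"
      by (intro Bochner_Integration.integral_cong) auto
    also have "\<dots> = r * w t"
      using events[OF that] prob[OF that] by simp
    finally show ?thesis .
  qed
  have "expectation ?F = (\<Sum>t\<in>T. expectation (\<lambda>x. w t * of_bool (Y t x)))"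
    using int by (rule Bochner_Integration.integral_sum)
  also have "\<dots> = r * (\<Sum>t\<in>T. w t)"
    using exp by (simp only: sum_distrib_left cong: sum.cong)
  finally have "expectation ?F = r * (\<Sum>t\<in>T. w t)" .
  moreover have "0 \<le> ?F x \<and> ?F x \<le> (\<Sum>t\<in>T. w t)" for x
    using w by (intro conjI sum_nonneg sum_mono) (simp_all add: mult_le_cancel_left1)
  moreover have "?F \<in> borel_measurable M"
    using meas by (rule borel_measurable_sum)
  ultimately have "variance ?F \<le> r * (\<Sum>t\<in>T. w t) * ((\<Sum>t\<in>T. w t) - r * (\<Sum>t\<in>T. w t))"
    using variance_le_of_bounded[of ?F "\<Sum>t\<in>T. w t"] by simp
  then show ?thesis by (simp add: power2_eq_square algebra_simps)
qed

lemma (in prob_space) variance_weighted_sum_indep_bernoulli_pairs_le: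
  assumes indep: "indep_vars (\<lambda>_. count_space UNIV) X I" and "finite T"
    and pairs: "\<And>t. t \<in> T \<Longrightarrow> a t \<in> I \<and> b t \<in> I \<and> a t \<noteq> b t"
    and "\<And>t. t \<in> T \<Longrightarrow> distr M (count_space UNIV) (X (a t)) = measure_pmf (bernoulli_pmf p)"
    and "\<And>t. t \<in> T \<Longrightarrow> distr M (count_space UNIV) (X (b t)) = measure_pmf (bernoulli_pmf q)"
    and "0 \<le> p" "p \<le> 1" "0 \<le> q" "q \<le> 1" "\<And>t. t \<in> T \<Longrightarrow> 0 \<le> w t"
  shows "variance (\<lambda>x. \<Sum>t\<in>T. w t * of_bool (X (a t) x \<and> X (b t) x))
    \<le> p * q * (1 - p * q) * (\<Sum>t\<in>T. w t)\<^sup>2"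
proof (rule variance_weighted_sum_events_le)
  fix t assume "t \<in> T"
  then have [measurable]: "Measurable.pred M (X (a t))" "Measurable.pred M (X (b t))"
    using indep pairs by (auto simp: indep_vars_def)
  show "Measurable.pred M (\<lambda>x. X (a t) x \<and> X (b t) x)"
    by measurable
  show "prob {x \<in> space M. X (a t) x \<and> X (b t) x} = p * q"
    using \<open>t \<in> T\<close> assms by (intro prob_conj_indep_bernoulli[OF indep]) auto
qed (use assms in auto)

theorem theorem5:
  fixes V :: "'v set" and E :: "'v tedge set" and Mo :: "('m \<times> 'm) list" and \<delta> :: real
    and Ej :: "'v tedge \<Rightarrow> nat \<Rightarrow> 'v tedge set"
    and etaW :: "'v tedge \<Rightarrow> nat \<Rightarrow> 'v tedge \<Rightarrow> nat"
    and M :: "'a measure" and p q :: real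
    and \<omega> :: "'v tedge \<Rightarrow> 'a \<Rightarrow> bool"
    and \<omega>' :: "'v tedge \<times> nat \<times> 'v tedge \<Rightarrow> 'a \<Rightarrow> bool"
  assumes graph: "temporal_graph V E"
    and motif_len: "length Mo = 3"
    and motif_card: "card (motif_vertices Mo) = 3"
    and motif_conn: "motif_connected Mo"
    and delta: "\<delta> \<ge> 0"
    and Ej_sub: "\<And>e j. e \<in> E \<Longrightarrow> j \<in> {1,2,3} \<Longrightarrow> finite (Ej e j) \<and> Ej e j \<subseteq> E"
    and wedge_sum: "\<And>e j. e \<in> E \<Longrightarrow> j \<in> {1,2,3} \<Longrightarrow>
         (\<Sum>g\<in>Ej e j. etaW e j g) = eta E Mo \<delta> j e"
    and p: "0 < p" "p \<le> 1" and q: "0 < q" "q \<le> 1"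
    and P: "prob_space M"
    and indep: "prob_space.indep_vars M (\<lambda>_. count_space UNIV)
         (\<lambda>k. case k of Inl e \<Rightarrow> \<omega> e | Inr w \<Rightarrow> \<omega>' w)
         (Inl ` E \<union> Inr ` {(e, j, g). e \<in> E \<and> j \<in> {1,2,3} \<and> g \<in> Ej e j})"
    and bern_p: "\<And>e. e \<in> E \<Longrightarrow>
         distr M (count_space UNIV) (\<omega> e) = measure_pmf (bernoulli_pmf p)"
    and bern_q: "\<And>e j g. e \<in> E \<Longrightarrow> j \<in> {1,2,3} \<Longrightarrow> g \<in> Ej e j \<Longrightarrow>
         distr M (count_space UNIV) (\<omega>' (e, j, g)) = measure_pmf (bernoulli_pmf q)"
  shows "prob_space.variance M
           (\<lambda>x. 1 / (3 * p * q) * (\<Sum>e\<in>E. \<Sum>j\<in>{1,2,3::nat}. \<Sum>g\<in>Ej e j.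
              of_bool (\<omega> e x) * of_bool (\<omega>' (e, j, g) x) * real (etaW e j g)))
         \<le> (1 - p * q) / (p * q) * (real (motif_count E Mo \<delta>))\<^sup>2"
proof -
  interpret prob_space M by (rule P)
  define T where "T = {(e, j, g). e \<in> E \<and> j \<in> {1,2,3::nat} \<and> g \<in> Ej e j}"
  define X where "X = (\<lambda>k. case k of Inl e \<Rightarrow> \<omega> e | Inr w \<Rightarrow> \<omega>' w)"
  define w where "w = (\<lambda>(e, j, g). real (etaW e j g))"
  have fE: "finite E" using graph by (simp add: temporal_graph_def)
  have T_Sigma: "T = Sigma E (\<lambda>e. Sigma {1,2,3} (Ej e))"
    by (auto simp: T_def)
  have sum_T: "(\<Sum>e\<in>E. \<Sum>j\<in>{1,2,3::nat}. \<Sum>g\<in>Ej e j. f e j g) = (\<Sum>(e, j, g)\<in>T. f e j g)"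
    for f :: "_ \<Rightarrow> _ \<Rightarrow> _ \<Rightarrow> real"
    unfolding T_Sigma using fE Ej_sub by (intro sum_sum_sum_Sigma) auto
  have estimator: "(\<Sum>e\<in>E. \<Sum>j\<in>{1,2,3::nat}. \<Sum>g\<in>Ej e j.
      of_bool (\<omega> e x) * of_bool (\<omega>' (e, j, g) x) * real (etaW e j g))
    = (\<Sum>t\<in>T. w t * of_bool (X (Inl (fst t)) x \<and> X (Inr t) x))" for x
    unfolding sum_T by (intro sum.cong) (auto simp: X_def w_def)
  have "(\<Sum>t\<in>T. w t) = real (\<Sum>e\<in>E. \<Sum>j\<in>{1,2,3::nat}. \<Sum>g\<in>Ej e j. etaW e j g)"
    by (simp only: sum_T w_def of_nat_sum)
  then have total_weight: "(\<Sum>t\<in>T. w t) = 3 * real (motif_count E Mo \<delta>)"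
    by (simp only: sum_wedge_counts_eq_three_motif_count[OF fE motif_len wedge_sum]
        of_nat_mult of_nat_numeral)
  have "variance (\<lambda>x. \<Sum>t\<in>T. w t * of_bool (X (Inl (fst t)) x \<and> X (Inr t) x))
      \<le> p * q * (1 - p * q) * (\<Sum>t\<in>T. w t)\<^sup>2"
  proof (rule variance_weighted_sum_indep_bernoulli_pairs_le)
    show "indep_vars (\<lambda>_. count_space UNIV) X (Inl ` E \<union> Inr ` T)"
      using indep by (simp only: X_def T_def)
    show "finite T"
      unfolding T_Sigma using fE Ej_sub by (intro finite_SigmaI) auto
  qed (use p q in \<open>auto simp: T_def X_def w_def bern_p bern_q\<close>)
  then have "variance (\<lambda>x. 1 / (3 * p * q) *
        (\<Sum>t\<in>T. w t * of_bool (X (Inl (fst t)) x \<and> X (Inr t) x)))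
      \<le> (1 / (3 * p * q))\<^sup>2 * (p * q * (1 - p * q) * (3 * real (motif_count E Mo \<delta>))\<^sup>2)"
    unfolding variance_cmult total_weight by (rule mult_left_mono) simp
  also have "\<dots> = (1 - p * q) / (p * q) * (real (motif_count E Mo \<delta>))\<^sup>2"
    using p q by (simp add: field_simps power2_eq_square)
  finally show ?thesis
    by (simp only: estimator)
qed

end
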